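(* Let $f, g$ be real-valued functions on a Cartesian product $X = \prod_{i\in I} X_i$ whose difference sets $\Delta(f)$ and $\Delta(g)$ are finite. Then there exists $\alpha_0 \in (0, \infty]$, depending on $f$ and $g$, such that $f + \alpha g$ refines $f$ for every real $\alpha$ with $|\alpha| < \alpha_0$.
   Context: Two elements of $X$ are adjacent if they differ in exactly one coordinate. For $f, f'\colon X \to \mathbb{R}$, $f'$ refines $f$ if for all $\vec{x},\vec{x}' \in X$ having all but one coordinate the same, $f(\vec{x}) < f(\vec{x}')$ implies $f'(\vec{x}) < f'(\vec{x}')$. The difference set of $f$ is $\Delta(f) = \{f(\vec{x}') - f(\vec{x}) : \vec{x}, \vec{x}' \text{ adjacent}\}$. *)

theory Defs
  imports Main "HOL-Library.Extended_Real" "HOL-Library.FuncSet"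
begin

text \<open>The Cartesian product X = Pi_{i in I} X_i is modelled as PiE I Xs
 (extensional functions). Two elements are adjacent if they differ in exactly one coordinate.\<close>

definition adjacent :: "'i set \<Rightarrow> ('i \<Rightarrow> 'a) \<Rightarrow> ('i \<Rightarrow> 'a) \<Rightarrow> bool" where
  "adjacent I x x' \<longleftrightarrow> (\<exists>i. {j \<in> I. x j \<noteq> x' j} = {i})"

definition all_but_one_same :: "'i set \<Rightarrow> ('i \<Rightarrow> 'a) \<Rightarrow> ('i \<Rightarrow> 'a) \<Rightarrow> bool" where
  "all_but_one_same I x x' \<longleftrightarrow> (\<exists>i\<in>I. \<forall>j\<in>I - {i}. x j = x' j)"

definition refines :: "'i set \<Rightarrow> ('i \<Rightarrow> 'a set) \<Rightarrow> (('i \<Rightarrow> 'a) \<Rightarrow> real) \<Rightarrow> (('i \<Rightarrow> 'a) \<Rightarrow> real) \<Rightarrow> bool" where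
  "refines I Xs f' f \<longleftrightarrow>
     (\<forall>x\<in>PiE I Xs. \<forall>x'\<in>PiE I Xs. all_but_one_same I x x' \<longrightarrow> f x < f x' \<longrightarrow> f' x < f' x')"

definition diff_set :: "'i set \<Rightarrow> ('i \<Rightarrow> 'a set) \<Rightarrow> (('i \<Rightarrow> 'a) \<Rightarrow> real) \<Rightarrow> real set" where
  "diff_set I Xs f = {f x' - f x | x x'. x \<in> PiE I Xs \<and> x' \<in> PiE I Xs \<and> adjacent I x x'}"

end

theory Submission
  imports Defs
begin

text \<open>Only finitely many differences occur along edges, so the increases of f along edges
  are bounded below by some m > 0 and the changes of g along edges are bounded by some M > 0.
  For |\<alpha>| < m / M the perturbation \<alpha> g moves no edge difference of f by m or more, so no
  strict increase of f is reversed.\<close>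

lemma all_but_one_same_imp_adjacent:
  assumes "x \<in> PiE I Xs" "x' \<in> PiE I Xs" "all_but_one_same I x x'" "x \<noteq> x'"
  shows "adjacent I x x'"
proof -
  from assms(3) obtain i where i: "i \<in> I" "\<forall>j\<in>I - {i}. x j = x' j"
    unfolding all_but_one_same_def by blast
  have "x i \<noteq> x' i"
  proof
    assume "x i = x' i"
    with i have "\<forall>j\<in>I. x j = x' j" by blast
    with assms(1,2,4) show False by (metis PiE_ext)
  qed
  with i have "{j \<in> I. x j \<noteq> x' j} = {i}" by blast
  then show ?thesis unfolding adjacent_def by blast
qed

lemma finite_real_set_positive_lower_bound:
  fixes D :: "real set"
  assumes "finite D"
  shows "\<exists>m>0. \<forall>d\<in>D. 0 < d \<longrightarrow> m \<le> d"
proof (intro exI conjI ballI impI)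
  let ?m = "Min (insert 1 {d \<in> D. 0 < d})"
  show "0 < ?m" using assms by simp
  show "?m \<le> d" if "d \<in> D" "0 < d" for d using assms that by simp
qed

lemma finite_real_set_abs_bound:
  fixes D :: "real set"
  assumes "finite D"
  shows "\<exists>M>0. \<forall>d\<in>D. \<bar>d\<bar> \<le> M"
proof (intro exI conjI ballI)
  let ?M = "Max (insert 1 (abs ` D))"
  have "1 \<le> ?M" by (rule Max_ge) (use assms in auto)
  then show "0 < ?M" by linarith
  show "\<bar>d\<bar> \<le> ?M" if "d \<in> D" for d using assms that by (simp add: Max_ge_iff)
qed

lemma refines_add_small_perturbation:
  assumes gap: "\<And>x x'. \<lbrakk>x \<in> PiE I Xs; x' \<in> PiE I Xs; adjacent I x x'; f x < f x'\<rbrakk>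
      \<Longrightarrow> m \<le> f x' - f x"
    and bound: "\<And>x x'. \<lbrakk>x \<in> PiE I Xs; x' \<in> PiE I Xs; adjacent I x x'\<rbrakk>
      \<Longrightarrow> \<bar>g x' - g x\<bar> \<le> M"
    and small: "\<bar>\<alpha>\<bar> * M < m"
  shows "refines I Xs (\<lambda>x. f x + \<alpha> * g x) f"
  unfolding refines_def
proof (intro ballI impI)
  fix x x' assume x: "x \<in> PiE I Xs" and x': "x' \<in> PiE I Xs"
    and same: "all_but_one_same I x x'" and less: "f x < f x'"
  then have adj: "adjacent I x x'"
    using all_but_one_same_imp_adjacent by (metis order.irrefl)
  have "\<bar>\<alpha> * (g x' - g x)\<bar> \<le> \<bar>\<alpha>\<bar> * M"
    using bound[OF x x' adj] by (simp add: abs_mult mult_left_mono)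
  also have "\<dots> < f x' - f x"
    using small gap[OF x x' adj less] by linarith
  finally show "f x + \<alpha> * g x < f x' + \<alpha> * g x'"
    by (simp add: algebra_simps abs_less_iff)
qed

lemma finite_diff_set_positive_gap:
  assumes "finite (diff_set I Xs f)"
  obtains m where "0 < m"
    "\<And>x x'. \<lbrakk>x \<in> PiE I Xs; x' \<in> PiE I Xs; adjacent I x x'; f x < f x'\<rbrakk>
      \<Longrightarrow> m \<le> f x' - f x"
proof -
  from finite_real_set_positive_lower_bound[OF assms]
  obtain m where m: "0 < m" "\<forall>d\<in>diff_set I Xs f. 0 < d \<longrightarrow> m \<le> d" by blast
  show ?thesis
  proof (rule that[OF m(1)])
    fix x x' assume "x \<in> PiE I Xs" "x' \<in> PiE I Xs" "adjacent I x x'" "f x < f x'"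
    then have "f x' - f x \<in> diff_set I Xs f" unfolding diff_set_def by blast
    with m(2) \<open>f x < f x'\<close> show "m \<le> f x' - f x" by simp
  qed
qed

lemma finite_diff_set_abs_bound:
  assumes "finite (diff_set I Xs g)"
  obtains M where "0 < M"
    "\<And>x x'. \<lbrakk>x \<in> PiE I Xs; x' \<in> PiE I Xs; adjacent I x x'\<rbrakk> \<Longrightarrow> \<bar>g x' - g x\<bar> \<le> M"
proof -
  from finite_real_set_abs_bound[OF assms]
  obtain M where M: "0 < M" "\<forall>d\<in>diff_set I Xs g. \<bar>d\<bar> \<le> M" by blast
  show ?thesis
  proof (rule that[OF M(1)])
    fix x x' assume "x \<in> PiE I Xs" "x' \<in> PiE I Xs" "adjacent I x x'"
    then have "g x' - g x \<in> diff_set I Xs g" unfolding diff_set_def by blast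
    with M(2) show "\<bar>g x' - g x\<bar> \<le> M" by blast
  qed
qed

theorem corollary2:
  fixes I :: "'i set" and Xs :: "'i \<Rightarrow> 'a set" and f g :: "('i \<Rightarrow> 'a) \<Rightarrow> real"
  assumes "finite (diff_set I Xs f)" and "finite (diff_set I Xs g)"
  shows "\<exists>\<alpha>0::ereal. 0 < \<alpha>0 \<and>
           (\<forall>\<alpha>::real. ereal \<bar>\<alpha>\<bar> < \<alpha>0 \<longrightarrow> refines I Xs (\<lambda>x. f x + \<alpha> * g x) f)"
proof -
  obtain m where m: "0 < m"
    "\<And>x x'. \<lbrakk>x \<in> PiE I Xs; x' \<in> PiE I Xs; adjacent I x x'; f x < f x'\<rbrakk>
      \<Longrightarrow> m \<le> f x' - f x"
    using finite_diff_set_positive_gap[OF assms(1)] by blast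
  obtain M where M: "0 < M"
    "\<And>x x'. \<lbrakk>x \<in> PiE I Xs; x' \<in> PiE I Xs; adjacent I x x'\<rbrakk> \<Longrightarrow> \<bar>g x' - g x\<bar> \<le> M"
    using finite_diff_set_abs_bound[OF assms(2)] by blast
  show ?thesis
  proof (intro exI conjI allI impI)
    show "0 < ereal (m / M)" using m(1) M(1) by simp
    fix \<alpha> :: real
    assume "ereal \<bar>\<alpha>\<bar> < ereal (m / M)"
    then have "\<bar>\<alpha>\<bar> * M < m" using M(1) by (simp add: pos_less_divide_eq)
    then show "refines I Xs (\<lambda>x. f x + \<alpha> * g x) f"
      by (intro refines_add_small_perturbation[where m = m and M = M] m(2) M(2))
  qed
qed

end
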